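(* Let $(V,u_r)$ be a strongly adapted homogeneous feedback pair (sAHFP) for the pure chain of integrators of order $r$, with parameters $\kappa$, $\gamma_r$. Then there exist constants $C_0,C_1>0$ such that for every $\eta>0$ and every $z\in\mathbb{R}^r$, $$|\partial_rV(z)|\le C_0\,\eta^{1+\frac\kappa2}+C_1\frac{|u_r(z)\partial_rV(z)|}{\eta^{\gamma_r(1+\frac\kappa2)}}.$$
   Context: Fix an integer $r\ge2$. Let $e_1,\dots,e_r$ be the canonical basis of $\mathbb{R}^r$ and $J_r$ the $r\times r$ matrix with $J_re_1=0$ and $J_re_i=e_{i-1}$ for $2\le i\le r$. For $a>0$, $\lfloor x\rceil^a:=|x|^a\,\mathrm{sgn}(x)$. $\partial_jV$ is the partial derivative of $V$ in $z_j$. Weights and dilations: given $\kappa\in(-1,0)$ and $p\in(0,2)$, set $p_i=p+(i-1)\kappa$ for $1\le i\le r+1$, and $\delta_\lambda(z)=(\lambda^{p_1}z_1,\dots,\lambda^{p_r}z_r)$ for $\lambda>0$. A function $f$ is homogeneous of degree $q$ if $f(\delta_\lambda(z))=\lambda^qf(z)$ for all $\lambda>0,z$. AHFP: a pair $(V,u_r)$ with $V:\mathbb{R}^r\to[0,\infty)$, $u_r:\mathbb{R}^r\to\mathbb{R}$ is an adapted homogeneous feedback pair if there exist $\kappa\in(-1,0)$, $p\in(0,2)$ with $p_{r+1}>0$ such that: $u_r$ is continuous, $u_r(0)=0$, homogeneous of degree $p_{r+1}$; $V$ is $C^1$, positive definite and homogeneous of degree $2$; there exist a continuous $\rho$ and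 constants $0<c_r\le d_r$ with $c_r\le\rho\le d_r$ and $\langle\nabla V(z),J_rz+u_r(z)e_r\rangle=-\rho(z)V(z)^{1+\frac\kappa2}$ for all $z$; and $u_r(z)\partial_rV(z)\le0$ for all $z$. It is strongly adapted (sAHFP) if moreover $u_r(z)=-l_r\lfloor\partial_rV(z)\rceil^{\gamma_r}$ for some constants $l_r>0$, $\gamma_r>0$. *)

theory Defs
  imports "HOL-Analysis.Analysis"
begin

text \<open>State space R^r is rendered as real^('n::{finite,linorder}) with a linearly ordered finite index type;
  the k-th element of 'n (1-based) corresponds to the coordinate z_k, and r = CARD('n).\<close>

definition idx :: "'n::{finite,linorder} \<Rightarrow> nat" where
  "idx i = card {j. j < i} + 1"

definition lastidx :: "'n::{finite,linorder}" where
  "lastidx = Max UNIV"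

text \<open>The shift matrix J_r: J e_1 = 0, J e_i = e_(i-1); hence (J z)_k = z_(k+1), (J z)_r = 0.\<close>
definition Jshift :: "real^('n::{finite,linorder}) \<Rightarrow> real^('n::{finite,linorder})" where
  "Jshift z = (\<chi> k. (\<Sum>j\<in>{j. idx j = idx k + 1}. z $ j))"

definition sgnpow :: "real \<Rightarrow> real \<Rightarrow> real" where
  "sgnpow x a = \<bar>x\<bar> powr a * sgn x"

definition partial :: "(real^('n::{finite,linorder}) \<Rightarrow> real) \<Rightarrow> 'n \<Rightarrow> real^('n::{finite,linorder}) \<Rightarrow> real" where
  "partial V j z = frechet_derivative V (at z) (axis j 1)"

definition weight :: "real \<Rightarrow> real \<Rightarrow> nat \<Rightarrow> real" where
  "weight \<kappa> p i = p + (real i - 1) * \<kappa>"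

definition dil :: "real \<Rightarrow> real \<Rightarrow> real \<Rightarrow> real^('n::{finite,linorder}) \<Rightarrow> real^('n::{finite,linorder})" where
  "dil \<kappa> p lam z = (\<chi> i. lam powr (weight \<kappa> p (idx i)) * z $ i)"

definition homog :: "real \<Rightarrow> real \<Rightarrow> (real^('n::{finite,linorder}) \<Rightarrow> real) \<Rightarrow> real \<Rightarrow> bool" where
  "homog \<kappa> p f q \<longleftrightarrow> (\<forall>lam>0. \<forall>z. f (dil \<kappa> p lam z) = lam powr q * f z)"

definition C1 :: "(real^('n::{finite,linorder}) \<Rightarrow> real) \<Rightarrow> bool" where
  "C1 V \<longleftrightarrow> (\<forall>z. V differentiable (at z)) \<and> (\<forall>j. continuous_on UNIV (partial V j))"

definition AHFP_params :: "real \<Rightarrow> real \<Rightarrow> (real^('n::{finite,linorder}) \<Rightarrow> real) \<Rightarrow> (real^('n::{finite,linorder}) \<Rightarrow> real) \<Rightarrow> bool" where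
  "AHFP_params \<kappa> p V u \<longleftrightarrow>
     -1 < \<kappa> \<and> \<kappa> < 0 \<and> 0 < p \<and> p < 2 \<and> weight \<kappa> p (CARD('n) + 1) > 0 \<and>
     continuous_on UNIV u \<and> u 0 = 0 \<and> homog \<kappa> p u (weight \<kappa> p (CARD('n) + 1)) \<and>
     (\<forall>z. V z \<ge> 0) \<and> C1 V \<and> V 0 = 0 \<and> (\<forall>z. z \<noteq> 0 \<longrightarrow> V z > 0) \<and> homog \<kappa> p V 2 \<and>
     (\<exists>\<rho> c d. continuous_on UNIV \<rho> \<and> 0 < c \<and> c \<le> d \<and> (\<forall>z. c \<le> \<rho> z \<and> \<rho> z \<le> d) \<and>
        (\<forall>z. frechet_derivative V (at z) (Jshift z + u z *\<^sub>R axis lastidx 1)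
               = - \<rho> z * V z powr (1 + \<kappa> / 2))) \<and>
     (\<forall>z. u z * partial V lastidx z \<le> 0)"

definition AHFP :: "(real^('n::{finite,linorder}) \<Rightarrow> real) \<Rightarrow> (real^('n::{finite,linorder}) \<Rightarrow> real) \<Rightarrow> bool" where
  "AHFP V u \<longleftrightarrow> (\<exists>\<kappa> p. AHFP_params \<kappa> p V u)"

definition sAHFP_params :: "real \<Rightarrow> real \<Rightarrow> real \<Rightarrow> real \<Rightarrow> (real^('n::{finite,linorder}) \<Rightarrow> real) \<Rightarrow> (real^('n::{finite,linorder}) \<Rightarrow> real) \<Rightarrow> bool" where
  "sAHFP_params \<kappa> p l \<gamma> V u \<longleftrightarrow> AHFP_params \<kappa> p V u \<and> l > 0 \<and> \<gamma> > 0 \<and>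
     (\<forall>z. u z = - l * sgnpow (partial V lastidx z) \<gamma>)"

end

theory Submission
  imports Defs
begin

text \<open>Only the shape of the feedback matters: with \<open>u = -l \<lfloor>\<partial>\<^sub>rV\<rceil>\<^sup>\<gamma>\<close> one has
  \<open>|u \<partial>\<^sub>rV| = l |\<partial>\<^sub>rV|\<^sup>1\<^sup>+\<^sup>\<gamma>\<close>, and every \<open>x \<ge> 0\<close> satisfies \<open>x \<le> e + x\<^sup>1\<^sup>+\<^sup>\<gamma> / e\<^sup>\<gamma>\<close>
  for \<open>e > 0\<close>: if \<open>x \<le> e\<close> the first term dominates, otherwise \<open>(x/e)\<^sup>\<gamma> \<ge> 1\<close>.
  Taking \<open>e = \<eta>\<^sup>1\<^sup>+\<^sup>\<kappa>\<^sup>/\<^sup>2\<close> gives the claim with \<open>C\<^sub>0 = 1\<close>, \<open>C\<^sub>1 = 1/l\<close>.\<close>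

lemma le_add_powr_mult_div_powr:
  fixes x e g :: real
  assumes "x \<ge> 0" "e > 0" "g \<ge> 0"
  shows "x \<le> e + x powr g * x / e powr g"
proof (cases "x \<le> e")
  case True
  then show ?thesis using assms by (simp add: add_increasing2)
next
  case False
  then have "e powr g \<le> x powr g"
    using assms by (intro powr_mono2) auto
  then have "1 \<le> x powr g / e powr g"
    using assms by simp
  then have "x \<le> x powr g / e powr g * x"
    using assms by (metis mult.commute mult.right_neutral mult_left_mono)
  also have "\<dots> = x powr g * x / e powr g"
    by simp
  finally show ?thesis
    using assms by linarith
qed

lemma abs_sgnpow: "\<bar>sgnpow x a\<bar> = \<bar>x\<bar> powr a"
  by (simp add: sgnpow_def abs_mult abs_sgn_eq)

lemma sAHFP_params_abs_feedback_mult: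
  assumes "sAHFP_params \<kappa> p l \<gamma> V u"
  shows "\<bar>u z * partial V lastidx z\<bar> = l * (\<bar>partial V lastidx z\<bar> powr \<gamma> * \<bar>partial V lastidx z\<bar>)"
  using assms by (simp add: sAHFP_params_def abs_mult abs_sgnpow)

theorem lemma2:
  fixes V u :: "real^'n::{finite,linorder} \<Rightarrow> real" and \<kappa> p l \<gamma> :: real
  assumes "CARD('n) \<ge> 2"
    and "sAHFP_params \<kappa> p l \<gamma> V u"
  shows "\<exists>C0>0. \<exists>C1>0. \<forall>\<eta>>0. \<forall>z.
           \<bar>partial V lastidx z\<bar>
             \<le> C0 * \<eta> powr (1 + \<kappa> / 2)
                + C1 * \<bar>u z * partial V lastidx z\<bar> / \<eta> powr (\<gamma> * (1 + \<kappa> / 2))"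
proof (rule exI[of _ 1], rule conjI, simp, rule exI[of _ "1 / l"], intro conjI allI impI)
  have l: "l > 0" and \<gamma>: "\<gamma> > 0"
    using assms(2) by (auto simp: sAHFP_params_def)
  then show "0 < 1 / l" by simp
  fix \<eta> :: real and z
  assume "\<eta> > 0"
  let ?P = "\<bar>partial V lastidx z\<bar>" and ?e = "\<eta> powr (1 + \<kappa> / 2)"
  have "?P \<le> ?e + ?P powr \<gamma> * ?P / ?e powr \<gamma>"
    using \<open>\<eta> > 0\<close> \<gamma> by (intro le_add_powr_mult_div_powr) auto
  also have "?e powr \<gamma> = \<eta> powr (\<gamma> * (1 + \<kappa> / 2))"
    by (simp add: powr_powr mult.commute)
  also have "?P powr \<gamma> * ?P = 1 / l * \<bar>u z * partial V lastidx z\<bar>"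
    using l by (simp add: sAHFP_params_abs_feedback_mult[OF assms(2)])
  finally show "?P \<le> 1 * ?e + 1 / l * \<bar>u z * partial V lastidx z\<bar> / \<eta> powr (\<gamma> * (1 + \<kappa> / 2))"
    by simp
qed

end
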